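(* Let $q=2^h$, let $n,s$ be positive integers, $\beta\in\mathbb{F}_{q^n}\setminus\{0,1\}$, and $\epsilon\in\mathbb{F}_{q^n}$ with $\mathrm{Tr}_{q^n/2}(\epsilon)=1$. Then the plane curve $\mathcal{C}_2$ with affine equation $F_2(X,Z)=0$, where \[ F_2(X,Z)=X^2(Z^2+Z+\epsilon)^{q^s}+X\bigl(\beta+\mathrm{Tr}_{q^s/2}(Z^2+Z+\epsilon)\bigr)+Z^2+Z+\epsilon, \] is absolutely irreducible.
   Context: $\mathrm{Tr}_{q^s/2}(Y)=\sum_{i=0}^{hs-1}Y^{2^i}$ (as a polynomial), and $\mathrm{Tr}_{q^n/2}(x)=\sum_{i=0}^{hn-1}x^{2^i}$ is the absolute trace of $\mathbb{F}_{q^n}$. Absolutely irreducible means irreducible over the algebraic closure of $\mathbb{F}_{q^n}$. *)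

theory Defs
  imports "HOL-Computational_Algebra.Computational_Algebra"
begin

text \<open>Bivariate polynomials in X, Z are represented as elements of \<open>'a poly poly\<close>:
  the outer variable is X, the inner variable (coefficients) is Z.\<close>

definition abs_trace :: "nat \<Rightarrow> 'a::comm_ring_1 \<Rightarrow> 'a" where
  "abs_trace m x = (\<Sum>i<m. x ^ (2 ^ i))"

definition trace_poly :: "nat \<Rightarrow> 'a::comm_ring_1 poly \<Rightarrow> 'a poly" where
  "trace_poly m G = (\<Sum>i<m. G ^ (2 ^ i))"

definition F2 :: "nat \<Rightarrow> nat \<Rightarrow> 'a::comm_ring_1 \<Rightarrow> 'a \<Rightarrow> 'a poly poly" where
  "F2 h s \<beta> \<epsilon> =
     (let G = [:\<epsilon>, 1, 1:]
      in [: G, [:\<beta>:] + trace_poly (h * s) G, G ^ ((2 ^ h) ^ s) :])"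

end

theory Submission
  imports Defs
begin

(* Over the algebraic closure (characteristic 2) write G = Z^2 + Z + epsilon = (Z - z)(Z - z - 1)
   and Q = q^s, so that F_2 = G^Q X^2 + S X + G with S = beta + Tr(G) of degree at most Q.
   Since Tr vanishes at the roots of G, S takes the value beta <> 0 at z and at z + 1; hence G and S
   are coprime and F_2 has no factor of degree 0 in X.  A factorization (a_0 + a_1 X)(b_0 + b_1 X)
   gives t_1 = a_0 b_1 and t_2 = a_1 b_0 with t_1 t_2 = G^(Q+1) and t_1 + t_2 = S, so each t_i is a
   constant times powers of Z - z and Z - z - 1.  Evaluating t_1 + t_2 at z and z + 1 leaves two
   possibilities: one t_i is a constant, and then deg S = 2(Q+1) > Q; or
   {t_1, t_2} = {beta (Z - z)^(Q+1), beta (Z - z - 1)^(Q+1)} with beta^2 = 1, i.e. beta = 1. *)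

lemma minus_eq_self_char2:
  fixes x :: "'a::ring_1"
  assumes "(2::'a) = 0"
  shows "- x = x"
proof -
  have "x + x = 0"
    using assms by (metis mult_2 mult_zero_left)
  then show ?thesis
    by (simp add: minus_unique)
qed

lemma square_eq_one_char2:
  fixes b :: "'a::idom"
  assumes "(2::'a) = 0" and "b * b = 1"
  shows "b = 1"
proof -
  have "(b - 1) * (b - 1) = b * b - 1 - 2 * (b - 1)"
    by (simp add: algebra_simps)
  also have "\<dots> = 0"
    using assms by simp
  finally show ?thesis
    by simp
qed

lemma of_nat_card_UNIV_eq_0: "of_nat (card (UNIV :: 'a::{ring_1,finite} set)) = (0::'a)"
proof -
  have "(\<Sum>x\<in>(UNIV::'a set). x) = (\<Sum>x\<in>UNIV. x + 1)"
    by (rule sum.reindex_bij_witness[of _ "\<lambda>x. x + 1" "\<lambda>x. x - 1"]) auto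
  also have "\<dots> = (\<Sum>x\<in>UNIV. x) + of_nat (card (UNIV :: 'a set))"
    by (simp add: sum.distrib)
  finally show ?thesis
    by simp
qed

lemma alg_closed_poly_roots_in_pairE:
  fixes f :: "'a::alg_closed_field poly"
  assumes "f \<noteq> 0" and "\<And>x. poly f x = 0 \<Longrightarrow> x = u \<or> x = v"
  obtains c i j where "c \<noteq> 0" and "f = smult c ([:-u,1:] ^ i * [:-v,1:] ^ j)"
  using assms
proof (induction "degree f" arbitrary: f thesis rule: less_induct)
  case less
  show ?case
  proof (cases "degree f = 0")
    case True
    then obtain c where "f = [:c:]"
      by (metis degree_eq_zeroE)
    with less.prems show ?thesis
      by (intro less.prems(1)[of c 0 0]) auto
  next
    case False
    then obtain r where r: "poly f r = 0"
      using alg_closed_imp_poly_has_root by blast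
    then obtain g where g: "f = [:-r,1:] * g"
      by (metis dvdE poly_eq_0_iff_dvd)
    have "g \<noteq> 0"
      using g less.prems by auto
    then have "degree g < degree f"
      using g degree_mult_eq[of "[:-r,1:]" g] by simp
    moreover have "poly g x = 0 \<Longrightarrow> x = u \<or> x = v" for x
      using less.prems(3)[of x] g by simp
    ultimately obtain c i j where c: "c \<noteq> 0" "g = smult c ([:-u,1:] ^ i * [:-v,1:] ^ j)"
      using less.hyps \<open>g \<noteq> 0\<close> by blast
    from r less.prems(3) have "r = u \<or> r = v"
      by blast
    then show ?thesis
    proof
      assume "r = u"
      then have "f = smult c ([:-u,1:] ^ Suc i * [:-v,1:] ^ j)"
        using g c by (simp add: algebra_simps)
      then show ?thesis
        using c less.prems(1) by blast
    next
      assume "r = v"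
      then have "f = smult c ([:-u,1:] ^ i * [:-v,1:] ^ Suc j)"
        using g c by (simp add: algebra_simps)
      then show ?thesis
        using c less.prems(1) by blast
    qed
  qed
qed

lemma order_linear_powers:
  fixes u v :: "'a::field"
  assumes "u \<noteq> v"
  shows "order u ([:-u,1:] ^ i * [:-v,1:] ^ j) = i" and "order v ([:-u,1:] ^ i * [:-v,1:] ^ j) = j"
proof -
  have "order u ([:-v,1:] ^ j) = 0" and "order v ([:-u,1:] ^ i) = 0"
    using assms by (auto intro!: order_0I simp: poly_power)
  then show "order u ([:-u,1:] ^ i * [:-v,1:] ^ j) = i" and "order v ([:-u,1:] ^ i * [:-v,1:] ^ j) = j"
    by (simp_all add: order_mult order_power_n_n)
qed

lemma smult_linear_powers_eqD:
  fixes u v c :: "'a::field"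
  assumes "u \<noteq> v"
    and eq: "smult c ([:-u,1:] ^ i * [:-v,1:] ^ j) = [:-u,1:] ^ k * [:-v,1:] ^ l"
  shows "c = 1" and "i = k" and "j = l"
proof -
  have "c \<noteq> 0"
    using eq by auto
  have "lead_coeff (smult c ([:-u,1:] ^ i * [:-v,1:] ^ j)) = c"
    by (simp add: lead_coeff_mult lead_coeff_power)
  then show "c = 1"
    using eq by (simp add: lead_coeff_mult lead_coeff_power)
  have "i = order u (smult c ([:-u,1:] ^ i * [:-v,1:] ^ j))"
    using \<open>c \<noteq> 0\<close> assms(1) by (simp add: order_smult order_linear_powers)
  then show "i = k"
    using eq assms(1) by (simp add: order_linear_powers)
  have "j = order v (smult c ([:-u,1:] ^ i * [:-v,1:] ^ j))"
    using \<open>c \<noteq> 0\<close> assms(1) by (simp add: order_smult order_linear_powers)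
  then show "j = l"
    using eq assms(1) by (simp add: order_linear_powers)
qed

lemma divisor_pair_of_linear_powersE:
  fixes t1 t2 :: "'a::alg_closed_field poly"
  assumes "u \<noteq> v" and prod: "t1 * t2 = ([:-u,1:] * [:-v,1:]) ^ N"
  obtains c1 c2 i j where "c1 * c2 = 1" and "i \<le> N" and "j \<le> N"
    and "t1 = smult c1 ([:-u,1:] ^ i * [:-v,1:] ^ j)"
    and "t2 = smult c2 ([:-u,1:] ^ (N - i) * [:-v,1:] ^ (N - j))"
proof -
  have "t1 \<noteq> 0" and "t2 \<noteq> 0"
    using prod by auto
  have roots: "\<And>x. poly t x = 0 \<Longrightarrow> x = u \<or> x = v" if "t dvd t1 * t2" for t
  proof -
    fix x
    assume "poly t x = 0"
    then have "poly (([:-u,1:] * [:-v,1:]) ^ N) x = 0"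
      using that by (metis prod dvdE mult_zero_left poly_mult)
    then have "poly [:-u,1:] x * poly [:-v,1:] x = 0"
      by (metis poly_mult poly_power power_eq_0_iff)
    then show "x = u \<or> x = v"
      by auto
  qed
  obtain c1 i1 j1 where c1: "t1 = smult c1 ([:-u,1:] ^ i1 * [:-v,1:] ^ j1)"
    using alg_closed_poly_roots_in_pairE[OF \<open>t1 \<noteq> 0\<close> roots[OF dvd_triv_left]] by blast
  obtain c2 i2 j2 where c2: "t2 = smult c2 ([:-u,1:] ^ i2 * [:-v,1:] ^ j2)"
    using alg_closed_poly_roots_in_pairE[OF \<open>t2 \<noteq> 0\<close> roots[OF dvd_triv_right]] by blast
  have "smult (c1 * c2) ([:-u,1:] ^ (i1 + i2) * [:-v,1:] ^ (j1 + j2)) = t1 * t2"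
    using c1 c2 by (simp add: power_add mult_ac)
  also have "\<dots> = [:-u,1:] ^ N * [:-v,1:] ^ N"
    using prod by (simp only: power_mult_distrib)
  finally have "c1 * c2 = 1" and "i1 + i2 = N" and "j1 + j2 = N"
    using smult_linear_powers_eqD[OF \<open>u \<noteq> v\<close>] by blast+
  moreover from this(2,3) have "N - i1 = i2" and "N - j1 = j2"
    by auto
  ultimately show thesis
    using c1 c2 by (intro that[of c1 c2 i1 j1]) simp_all
qed

lemma degree_add_of_linear_powers_char2:
  fixes t1 t2 :: "'a::alg_closed_field poly"
  assumes two: "(2::'a) = 0" and "N \<ge> 1"
    and prod: "t1 * t2 = ([:-z,1:] * [:-(z + 1),1:]) ^ N"
    and at_z: "poly (t1 + t2) z = b" and at_z1: "poly (t1 + t2) (z + 1) = b"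
    and "b \<noteq> 0" and "b \<noteq> 1"
  shows "2 * N \<le> degree (t1 + t2)"
proof -
  have "z \<noteq> z + 1"
    by simp
  then obtain c1 c2 i j where c: "c1 * c2 = 1" and "i \<le> N" "j \<le> N"
    and t1: "t1 = smult c1 ([:-z,1:] ^ i * [:-(z + 1),1:] ^ j)"
    and t2: "t2 = smult c2 ([:-z,1:] ^ (N - i) * [:-(z + 1),1:] ^ (N - j))"
    using divisor_pair_of_linear_powersE prod by blast
  have "c1 * 0 ^ i + c2 * 0 ^ (N - i) = b" and "c1 * 0 ^ j + c2 * 0 ^ (N - j) = b"
    using at_z at_z1 minus_eq_self_char2[OF two, of 1]
    by (simp_all add: t1 t2 poly_power)
  moreover have "(k = 0 \<and> c1 = b) \<or> (k = N \<and> c2 = b)"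
    if "c1 * 0 ^ k + c2 * 0 ^ (N - k) = b" and "k \<le> N" for k
    using that \<open>b \<noteq> 0\<close> \<open>N \<ge> 1\<close> by (cases "k = 0"; cases "k = N") (auto simp: zero_power)
  ultimately have i: "(i = 0 \<and> c1 = b) \<or> (i = N \<and> c2 = b)"
    and j: "(j = 0 \<and> c1 = b) \<or> (j = N \<and> c2 = b)"
    using \<open>i \<le> N\<close> \<open>j \<le> N\<close> by blast+
  have "\<not> (c1 = b \<and> c2 = b)"
    using c \<open>b \<noteq> 1\<close> square_eq_one_char2[OF two] by blast
  with i j have "(i = 0 \<and> j = 0) \<or> (i = N \<and> j = N)"
    by blast
  then show ?thesis
  proof
    assume "i = 0 \<and> j = 0"
    then have "degree t1 = 0" and "degree t2 = 2 * N"
      using c by (auto simp: t1 t2 degree_mult_eq degree_power_eq)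
    then show ?thesis
      using \<open>N \<ge> 1\<close> by (simp add: degree_add_eq_right)
  next
    assume "i = N \<and> j = N"
    then have "degree t2 = 0" and "degree t1 = 2 * N"
      using c by (auto simp: t1 t2 degree_mult_eq degree_power_eq)
    then show ?thesis
      using \<open>N \<ge> 1\<close> by (simp add: degree_add_eq_left)
  qed
qed

lemma irreducible_degree_2I:
  fixes F :: "'a::{idom_divide,algebraic_semidom} poly"
  assumes "degree F = 2"
    and primitive: "\<And>d. d dvd coeff F 0 \<Longrightarrow> d dvd coeff F 1 \<Longrightarrow> is_unit d"
    and no_linear_factors: "\<And>a0 a1 b0 b1. coeff F 0 = a0 * b0 \<Longrightarrow>
      coeff F 1 = a0 * b1 + a1 * b0 \<Longrightarrow> coeff F 2 = a1 * b1 \<Longrightarrow> False"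
  shows "irreducible F"
proof (rule irreducibleI)
  show "F \<noteq> 0" and "\<not> is_unit F"
    using assms(1) by (auto simp: is_unit_poly_iff)
next
  have const_factor: "is_unit A" if "F = A * B" and "degree A = 0" for A B
  proof -
    obtain a where A: "A = [:a:]"
      using \<open>degree A = 0\<close> by (metis degree_eq_zeroE)
    have "a dvd coeff F 0" and "a dvd coeff F 1"
      using \<open>F = A * B\<close> by (simp_all add: A)
    then show ?thesis
      by (simp add: A is_unit_const_poly_iff primitive)
  qed
  fix A B
  assume AB: "F = A * B"
  then have "A \<noteq> 0" and "B \<noteq> 0"
    using assms(1) by auto
  then have "degree A + degree B = 2"
    using AB assms(1) by (simp add: degree_mult_eq)
  then consider "degree A = 0" | "degree B = 0" | "degree A = 1" and "degree B = 1"
    by linarith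
  then show "is_unit A \<or> is_unit B"
  proof cases
    case 1
    then show ?thesis
      using AB const_factor by blast
  next
    case 2
    then show ?thesis
      using AB const_factor[of B A] by (simp add: mult.commute)
  next
    case 3
    have linear: "p = [:coeff p 0, coeff p 1:]" if "degree p = 1" for p :: "'a poly"
      using that by (auto intro!: poly_eqI simp: coeff_pCons coeff_eq_0 split: nat.split)
    have "F = [:coeff A 0, coeff A 1:] * [:coeff B 0, coeff B 1:]"
      using AB 3 linear by metis
    then show ?thesis
      using no_linear_factors[of "coeff A 0" "coeff B 0" "coeff B 1" "coeff A 1"]
      by (simp add: algebra_simps numeral_2_eq_2)
  qed
qed

lemma poly_trace_poly_eq_0: "poly G r = 0 \<Longrightarrow> poly (trace_poly m G) r = 0"
  by (simp add: trace_poly_def poly_sum poly_power zero_power)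

lemma degree_trace_poly_le: "degree (trace_poly m G) \<le> 2 ^ m * degree G"
  unfolding trace_poly_def
proof (rule degree_sum_le)
  fix i
  assume "i \<in> {..<m}"
  then have "degree G * 2 ^ i \<le> 2 ^ m * degree G"
    by (simp add: mult.commute)
  then show "degree (G ^ 2 ^ i) \<le> 2 ^ m * degree G"
    using degree_power_le le_trans by blast
qed simp

lemma artin_schreier_quadratic_splits_char2:
  fixes e :: "'a::alg_closed_field"
  assumes two: "(2::'a) = 0"
  obtains z where "[:e, 1, 1:] = [:-z,1:] * [:-(z + 1),1:]"
proof -
  obtain z where "poly [:e, 1, 1:] z = 0"
    using alg_closed_imp_poly_has_root[of "[:e, 1, 1:]"] by auto
  then have "z * z + z = - e"
    by (simp add: eq_neg_iff_add_eq_0 algebra_simps)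
  then have "z * z + z = e"
    by (simp add: minus_eq_self_char2[OF two])
  then have "[:e, 1, 1:] = [:-z,1:] * [:-(z + 1),1:]"
    using two minus_eq_self_char2[OF two, of 1] by (simp add: algebra_simps)
  then show thesis ..
qed

lemma common_divisor_is_unit_if_no_common_root:
  fixes d :: "'a::alg_closed_field poly"
  assumes "G \<noteq> 0" and "\<And>r. poly G r = 0 \<Longrightarrow> poly S r \<noteq> 0"
    and "d dvd G" and "d dvd S"
  shows "is_unit d"
proof -
  have "degree d = 0"
  proof (rule ccontr)
    assume "degree d \<noteq> 0"
    then obtain r where "poly d r = 0"
      using alg_closed_imp_poly_has_root by blast
    then have "poly G r = 0" and "poly S r = 0"
      using \<open>d dvd G\<close> \<open>d dvd S\<close> by (auto elim!: dvdE)
    with assms(2) show False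
      by blast
  qed
  moreover have "d \<noteq> 0"
    using \<open>d dvd G\<close> \<open>G \<noteq> 0\<close> by auto
  ultimately show ?thesis
    by (simp add: is_unit_iff_degree)
qed

lemma irreducible_F2_char2:
  fixes \<beta> \<epsilon> :: "'a::alg_closed_field"
  assumes two: "(2::'a) = 0" and "\<beta> \<noteq> 0" and "\<beta> \<noteq> 1"
  shows "irreducible (F2 h s \<beta> \<epsilon>)"
proof -
  define m where "m = h * s"
  define G where "G = [:\<epsilon>, 1, 1:]"
  define S where "S = [:\<beta>:] + trace_poly m G"
  have F2: "F2 h s \<beta> \<epsilon> = [:G, S, G ^ 2 ^ m:]"
    by (simp add: F2_def Let_def G_def S_def m_def power_mult)
  obtain z where G_eq: "G = [:-z,1:] * [:-(z + 1),1:]"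
    unfolding G_def using artin_schreier_quadratic_splits_char2[OF two] by blast
  then have "poly G z = 0" and "poly G (z + 1) = 0"
    by (simp_all add: algebra_simps)
  have S_at_roots: "poly S r = \<beta>" if "poly G r = 0" for r
    using that by (simp add: S_def poly_trace_poly_eq_0)
  have "degree S \<le> degree (trace_poly m G)"
    using degree_add_le_max[of "[:\<beta>:]" "trace_poly m G"] by (simp add: S_def)
  also have "\<dots> \<le> 2 ^ m * 2"
    using degree_trace_poly_le[of m G] by (simp add: G_def)
  finally have "degree S \<le> 2 ^ m * 2" .
  show ?thesis
    unfolding F2
  proof (rule irreducible_degree_2I)
    show "degree [:G, S, G ^ 2 ^ m:] = 2"
      by (simp add: G_def)
  next
    fix d
    assume "d dvd coeff [:G, S, G ^ 2 ^ m:] 0" and "d dvd coeff [:G, S, G ^ 2 ^ m:] 1"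
    moreover have "G \<noteq> 0"
      by (simp add: G_def)
    ultimately show "is_unit d"
      using common_divisor_is_unit_if_no_common_root[of G S d] S_at_roots \<open>\<beta> \<noteq> 0\<close> by simp
  next
    fix a0 a1 b0 b1
    assume "coeff [:G, S, G ^ 2 ^ m:] 0 = a0 * b0"
      and "coeff [:G, S, G ^ 2 ^ m:] 1 = a0 * b1 + a1 * b0"
      and "coeff [:G, S, G ^ 2 ^ m:] 2 = a1 * b1"
    then have "G = a0 * b0" and S: "S = a0 * b1 + a1 * b0" and "G ^ 2 ^ m = a1 * b1"
      by (simp_all add: numeral_2_eq_2)
    then have "(a0 * b1) * (a1 * b0) = G ^ (2 ^ m + 1)"
      by (simp add: power_add mult_ac)
    also have "\<dots> = ([:-z,1:] * [:-(z + 1),1:]) ^ (2 ^ m + 1)"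
      by (subst G_eq) (rule refl)
    moreover have "poly S z = \<beta>" and "poly S (z + 1) = \<beta>"
      using S_at_roots \<open>poly G z = 0\<close> \<open>poly G (z + 1) = 0\<close> by blast+
    ultimately have "2 * (2 ^ m + 1) \<le> degree S"
      unfolding S using \<open>\<beta> \<noteq> 0\<close> \<open>\<beta> \<noteq> 1\<close> by (intro degree_add_of_linear_powers_char2[OF two]) auto
    with \<open>degree S \<le> 2 ^ m * 2\<close> show False
      by simp
  qed
qed

context
  fixes \<phi> :: "'a::comm_ring_1 \<Rightarrow> 'b::comm_ring_1"
  assumes hom_add: "\<And>a b. \<phi> (a + b) = \<phi> a + \<phi> b"
    and hom_mult: "\<And>a b. \<phi> (a * b) = \<phi> a * \<phi> b"
    and hom_one: "\<phi> 1 = 1"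
begin

lemma hom_zero: "\<phi> 0 = 0"
  using hom_add[of 0 0] by simp

lemma map_poly_hom_add: "map_poly \<phi> (p + q) = map_poly \<phi> p + map_poly \<phi> q"
  by (intro poly_eqI) (simp add: coeff_map_poly hom_zero hom_add)

lemma map_poly_hom_mult: "map_poly \<phi> (p * q) = map_poly \<phi> p * map_poly \<phi> q"
proof (induction p rule: pCons_induct)
  case (pCons a p)
  then show ?case
    by (simp add: map_poly_hom_add map_poly_smult map_poly_pCons hom_zero hom_mult)
qed simp

lemma map_poly_hom_power: "map_poly \<phi> (p ^ k) = map_poly \<phi> p ^ k"
  by (induction k) (simp_all add: hom_one map_poly_hom_mult)

lemma map_poly_trace_poly: "map_poly \<phi> (trace_poly m G) = trace_poly m (map_poly \<phi> G)"
  unfolding trace_poly_def by (induction m) (simp_all add: map_poly_hom_add map_poly_hom_power)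

lemma map_poly_map_poly_F2:
  "map_poly (map_poly \<phi>) (F2 h s \<beta> \<epsilon>) = F2 h s (\<phi> \<beta>) (\<phi> \<epsilon>)"
  by (simp add: F2_def Let_def map_poly_pCons hom_zero hom_one map_poly_hom_add
      map_poly_hom_power map_poly_trace_poly)

end

lemma field_hom_eq_iff:
  fixes \<phi> :: "'a::field \<Rightarrow> 'b::field"
  assumes hom_add: "\<And>a b. \<phi> (a + b) = \<phi> a + \<phi> b"
    and hom_mult: "\<And>a b. \<phi> (a * b) = \<phi> a * \<phi> b"
    and hom_one: "\<phi> 1 = 1"
  shows "\<phi> x = \<phi> y \<longleftrightarrow> x = y"
proof
  assume "\<phi> x = \<phi> y"
  then have "\<phi> (x - y) = 0"
    using hom_add[of "x - y" y] by simp
  show "x = y"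
  proof (rule ccontr)
    assume "x \<noteq> y"
    then have "\<phi> ((x - y) * inverse (x - y)) = 1"
      using hom_one by simp
    with \<open>\<phi> (x - y) = 0\<close> show False
      by (simp add: hom_mult)
  qed
qed simp

theorem lemma3p11:
  fixes h n s :: nat
    and \<beta> \<epsilon> :: "'f::{field,finite}"
    and \<phi> :: "'f \<Rightarrow> 'k::alg_closed_field"
  assumes "h > 0" and "n > 0" and "s > 0"
    and "card (UNIV :: 'f set) = (2 ^ h) ^ n"
    and "\<beta> \<noteq> 0" and "\<beta> \<noteq> 1"
    and "abs_trace (h * n) \<epsilon> = 1"
    and "\<And>a b. \<phi> (a + b) = \<phi> a + \<phi> b"
    and "\<And>a b. \<phi> (a * b) = \<phi> a * \<phi> b"
    and "\<phi> 1 = 1"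
  shows "irreducible (map_poly (map_poly \<phi>) (F2 h s \<beta> \<epsilon>))"
proof -
  note hom = assms(8-10)
  have "(2::'f) ^ (h * n) = 0"
    using of_nat_card_UNIV_eq_0[where 'a='f] assms(4) by (simp add: power_mult)
  then have "(2::'f) = 0"
    by simp
  moreover have "\<phi> 2 = 2"
    using hom(1)[of 1 1] hom(3) by simp
  ultimately have "(2::'k) = 0"
    using hom_zero[OF hom] by simp
  moreover have "\<phi> \<beta> \<noteq> 0" and "\<phi> \<beta> \<noteq> 1"
    using assms(5,6) field_hom_eq_iff[OF hom] hom_zero[OF hom] hom(3) by metis+
  ultimately show ?thesis
    by (simp add: map_poly_map_poly_F2[OF hom] irreducible_F2_char2)
qed

end
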